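(* For every integer $m\ge 0$, $\zeta^\star(\bar 1,\{1\}_m)=-\mathrm{Li}_{m+1}\!\left(\tfrac12\right)$.
   Context: For nonzero integers $s_1,\dots,s_k$, with $\operatorname{sgn}(s)=1$ if $s>0$ and $-1$ if $s<0$, the multiple zeta star value is $\zeta^\star(s_1,\dots,s_k)=\sum_{n_1\ge n_2\ge\cdots\ge n_k\ge 1}\prod_{j=1}^k n_j^{-|s_j|}\operatorname{sgn}(s_j)^{n_j}$. A barred entry $\bar p$ denotes the negative entry $-p$. The notation $\{1\}_m$ means the entry $1$ repeated $m$ times. $\mathrm{Li}_s(x)=\sum_{n\ge1}x^n/n^s$ is the polylogarithm. *)

theory Defs
  imports "HOL-Analysis.Analysis"
begin

text \<open>Summand of a (possibly alternating) multiple zeta star value for a nonzero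
  integer entry s: sgn(s)^n / n^|s|.\<close>
definition mzs_term :: "int \<Rightarrow> nat \<Rightarrow> real" where
  "mzs_term s n = (of_int (sgn s)) ^ n / (real n) ^ (nat \<bar>s\<bar>)"

fun zeta_star_partial :: "int list \<Rightarrow> nat \<Rightarrow> real" where
  "zeta_star_partial [] N = 1"
| "zeta_star_partial (s # ss) N = (\<Sum>n=1..N. mzs_term s n * zeta_star_partial ss n)"

definition zeta_star :: "int list \<Rightarrow> real" where
  "zeta_star s = lim (zeta_star_partial s)"

definition polylog :: "nat \<Rightarrow> real \<Rightarrow> real" where
  "polylog s x = (\<Sum>n. x ^ (n+1) / (real (n+1)) ^ s)"

end

theory Submission
  imports Defs "HOL-Real_Asymp.Real_Asymp"
begin

text \<open>
  Let \<open>h\<^sub>m(n)\<close> be the star sum \<open>\<zeta>\<^sup>\<star>({1}\<^sub>m)\<close> truncated at \<open>n\<^sub>1 \<le> n\<close> and put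
  \<open>a\<^sub>j = h\<^sub>m(j) / j\<close>, so that the partial sums in question are \<open>\<Sum>\<^sub>j\<^sub>\<le>\<^sub>N (-1)\<^sup>j a\<^sub>j\<close>.
  Interchanging the nested sums with alternating binomial sums gives
  \<open>\<Sum>\<^sub>j\<^sub>\<le>\<^sub>k (-1)\<^sup>j C(k-1, j-1) a\<^sub>j = -1/k\<^sup>m\<^sup>+\<^sup>1\<close>, i.e. the Euler transform of the series
  is \<open>-\<Sum>\<^sub>k 2\<^sup>-\<^sup>k/k\<^sup>m\<^sup>+\<^sup>1 = -Li\<^sub>m\<^sub>+\<^sub>1(1/2)\<close>. Up to step \<open>N\<close> the Euler transform differs from
  the \<open>N\<close>-th partial sum by \<open>\<Sum>\<^sub>j (-1)\<^sup>j a\<^sub>j P(X\<^sub>N < j)\<close>, where \<open>X\<^sub>N\<close> is binomial with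
  parameters \<open>N\<close> and \<open>1/2\<close>. Since \<open>a\<^sub>j\<close> decreases to \<open>0\<close> (because \<open>h\<^sub>m(n) \<le> H\<^sub>n\<^sup>m\<close>) and the
  weights increase in \<open>j\<close> and vanish as \<open>N \<rightarrow> \<infinity>\<close>, this difference tends to \<open>0\<close>.
\<close>

lemma choose_alternating_partial_sum:
  "(\<Sum>j\<le>i. (-1)^j * of_nat (Suc k choose j)) = (-1)^i * (of_nat (k choose i) :: 'a::comm_ring_1)"
  by (induction i) (simp_all add: algebra_simps)

lemma choose_alternating_tail_sum:
  assumes "1 \<le> i" "i \<le> k"
  shows "(\<Sum>j=i..k. (-1)^j * of_nat (k choose j))
           = (-1)^i * (of_nat ((k - 1) choose (i - 1)) :: 'a::comm_ring_1)"
proof -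
  obtain i' k' where ik: "i = Suc i'" "k = Suc k'"
    using assms by (cases i; cases k) auto
  let ?t = "\<lambda>j. (-1)^j * (of_nat (k choose j) :: 'a)"
  have split: "{..k} = {..i'} \<union> {i..k}"
    using assms ik by auto
  have "(\<Sum>j\<le>k. ?t j) = (\<Sum>j\<le>i'. ?t j) + (\<Sum>j=i..k. ?t j)"
    unfolding split by (rule sum.union_disjoint) (auto simp: ik)
  moreover have "(\<Sum>j\<le>k. ?t j) = 0"
    using assms by (intro choose_alternating_sum) simp
  ultimately show ?thesis
    by (simp add: ik choose_alternating_partial_sum eq_neg_iff_add_eq_0 add.commute
        del: sum.cl_ivl_Suc)
qed

lemma sum_triangle_swap:
  fixes k :: nat
  shows "(\<Sum>j=1..k. \<Sum>i=1..j. f i j) = (\<Sum>i=1..k. \<Sum>j=i..k. f i j :: 'a::comm_monoid_add)"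
  by (induction k) (simp_all add: sum.distrib)

lemma sum_choose_pred_div:
  fixes f :: "nat \<Rightarrow> real"
  assumes "1 \<le> k"
  shows "(\<Sum>j=1..k. real ((k - 1) choose (j - 1)) * (f j / real j))
           = (\<Sum>j=1..k. real (k choose j) * f j) / real k"
  unfolding sum_divide_distrib
proof (rule sum.cong)
  fix j assume "j \<in> {1..k}"
  then have "real j * real (k choose j) = real k * real ((k - 1) choose (j - 1))"
    using times_binomial_minus1_eq[of j k] by (simp flip: of_nat_mult)
  with \<open>j \<in> {1..k}\<close> assms show "real ((k - 1) choose (j - 1)) * (f j / real j)
      = real (k choose j) * f j / real k"
    by (simp add: field_simps)
qed simp

definition binomial_lower_tail :: "nat \<Rightarrow> nat \<Rightarrow> real" where
  "binomial_lower_tail N j = (\<Sum>i<j. real (N choose i)) / 2 ^ N"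

lemma binomial_lower_tail_nonneg: "0 \<le> binomial_lower_tail N j"
  by (simp add: binomial_lower_tail_def sum_nonneg)

lemma binomial_lower_tail_mono: "j \<le> j' \<Longrightarrow> binomial_lower_tail N j \<le> binomial_lower_tail N j'"
  unfolding binomial_lower_tail_def by (intro divide_right_mono sum_mono2) auto

lemma binomial_lower_tail_Suc_self: "binomial_lower_tail N (Suc N) = 1"
proof -
  have "(\<Sum>i\<le>N. real (N choose i)) = 2 ^ N"
    using choose_row_sum[of N] by (metis of_nat_numeral of_nat_power of_nat_sum)
  then show ?thesis by (simp add: binomial_lower_tail_def lessThan_Suc_atMost)
qed

lemma binomial_lower_tail_le_1: "j \<le> Suc N \<Longrightarrow> binomial_lower_tail N j \<le> 1"
  using binomial_lower_tail_mono binomial_lower_tail_Suc_self by metis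

lemma binomial_lower_tail_Suc:
  assumes "1 \<le> j"
  shows "binomial_lower_tail (Suc N) j = binomial_lower_tail N j - real (N choose (j - 1)) / 2 ^ Suc N"
proof -
  have "(\<Sum>i<Suc j'. real (Suc N choose i)) = 2 * (\<Sum>i<Suc j'. real (N choose i)) - real (N choose j')" for j'
    by (induction j') simp_all
  with assms show ?thesis
    by (cases j) (simp_all add: binomial_lower_tail_def field_simps)
qed

lemma binomial_lower_tail_tendsto_0: "(\<lambda>N. binomial_lower_tail N j) \<longlonglongrightarrow> 0"
proof -
  have "(\<lambda>N. real (N choose i) / 2 ^ N) \<longlonglongrightarrow> 0" for i
  proof (rule tendsto_sandwich[of "\<lambda>_. 0" _ _ "\<lambda>N. real N ^ i / 2 ^ N"])
    show "\<forall>\<^sub>F N in sequentially. real (N choose i) / 2 ^ N \<le> real N ^ i / 2 ^ N"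
      using binomial_le_pow by (intro eventually_sequentiallyI[of i] divide_right_mono)
        (metis of_nat_le_iff of_nat_power, simp)
    show "(\<lambda>N. real N ^ i / 2 ^ N) \<longlonglongrightarrow> (0::real)" by real_asymp
  qed simp_all
  then have "(\<lambda>N. \<Sum>i<j. real (N choose i) / 2 ^ N) \<longlonglongrightarrow> 0"
    by (intro tendsto_null_sum)
  then show ?thesis by (simp add: binomial_lower_tail_def sum_divide_distrib)
qed

lemma euler_transform_partial_sum:
  fixes a :: "nat \<Rightarrow> real"
  shows "(\<Sum>k=1..N. (\<Sum>j=1..k. (-1)^j * real ((k - 1) choose (j - 1)) * a j) / 2 ^ k)
       = (\<Sum>j=1..N. (-1)^j * a j * (1 - binomial_lower_tail N j))"
proof (induction N)
  case (Suc N)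
  let ?S = "\<lambda>n. \<Sum>j=1..Suc N. (-1)^j * a j * (1 - binomial_lower_tail n j)"
  have "?S (Suc N) = ?S N + (\<Sum>j=1..Suc N. (-1)^j * real (N choose (j - 1)) * a j) / 2 ^ Suc N"
    by (simp add: sum_divide_distrib binomial_lower_tail_Suc algebra_simps flip: sum.distrib
        del: sum.cl_ivl_Suc)
  also have "?S N = (\<Sum>j=1..N. (-1)^j * a j * (1 - binomial_lower_tail N j))"
    by (simp add: binomial_lower_tail_Suc_self)
  finally show ?case using Suc.IH by simp
qed simp

lemma alternating_sum_abs_le:
  fixes a v :: "nat \<Rightarrow> real"
  assumes a_nonneg: "\<And>j. 0 \<le> a j" and a_dec: "\<And>j. p \<le> j \<Longrightarrow> a (Suc j) \<le> a j"
    and v_nonneg: "\<And>j. 0 \<le> v j" and v_mono: "mono v" and "p \<le> N"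
  shows "\<bar>\<Sum>j=p..N. (-1)^j * a j * v j\<bar> \<le> a p * v N"
proof -
  define T where "T q = (-1)^q * (\<Sum>j=q..N. (-1)^j * a j * v j)" for q
  \<comment> \<open>The lower bound is needed to carry the upper bound through \<open>T q = a q * v q - T (Suc q)\<close>.\<close>
  have "a q * v q - a q * v N \<le> T q \<and> T q \<le> a q * v N" if "q \<le> N" "p \<le> q" for q
    using that
  proof (induction q rule: inc_induct)
    case base
    have "T N = a N * v N"
      by (simp add: T_def mult.assoc[symmetric] flip: power_add mult_2)
    then show ?case using a_nonneg[of N] v_nonneg[of N] by simp
  next
    case (step q)
    have "T q = a q * v q - T (Suc q)"
      using step.hyps by (simp add: T_def sum.atLeast_Suc_atMost algebra_simps flip: power_add mult_2)
    moreover have "a (Suc q) \<le> a q" "v q \<le> v (Suc q)" "v (Suc q) \<le> v N"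
      using step.hyps step.prems a_dec[of q] v_mono by (auto intro: monoD)
    then have "a (Suc q) * v N \<le> a q * v N"
      and "a (Suc q) * (v N - v (Suc q)) \<le> a q * (v N - v q)"
      using a_nonneg v_nonneg by (auto intro: mult_right_mono mult_mono)
    moreover have "a (Suc q) * v (Suc q) - a (Suc q) * v N \<le> T (Suc q)"
      "T (Suc q) \<le> a (Suc q) * v N"
      using step.IH step.prems by auto
    ultimately show ?case
      by (simp add: right_diff_distrib)
  qed
  from this[of p] \<open>p \<le> N\<close> have "\<bar>T p\<bar> \<le> a p * v N"
    using mult_nonneg_nonneg[OF a_nonneg v_nonneg, of p p] by (simp add: abs_le_iff)
  then show ?thesis by (simp add: T_def abs_mult)
qed

lemma alternating_weighted_sum_tendsto_0:
  fixes a :: "nat \<Rightarrow> real" and w :: "nat \<Rightarrow> nat \<Rightarrow> real"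
  assumes a_lim: "a \<longlonglongrightarrow> 0" and a_nonneg: "\<And>j. 0 \<le> a j"
    and a_dec: "\<And>j. 1 \<le> j \<Longrightarrow> a (Suc j) \<le> a j"
    and w_nonneg: "\<And>N j. 0 \<le> w N j" and w_mono: "\<And>N. mono (w N)"
    and w_le_1: "\<And>N. w N N \<le> 1" and w_lim: "\<And>j. (\<lambda>N. w N j) \<longlonglongrightarrow> 0"
  shows "(\<lambda>N. \<Sum>j=1..N. (-1)^j * a j * w N j) \<longlonglongrightarrow> 0"
proof (rule LIMSEQ_I)
  fix r :: real
  assume "0 < r"
  then obtain M0 where M0: "\<And>j. M0 \<le> j \<Longrightarrow> a j < r / 2"
    using LIMSEQ_D[OF a_lim, of "r / 2"] a_nonneg by fastforce
  define M where "M = max M0 1"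
  have "(\<lambda>N. \<Sum>j\<in>{1..<M}. (-1)^j * a j * w N j) \<longlonglongrightarrow> 0"
    by (intro tendsto_null_sum tendsto_mult_right_zero w_lim)
  with \<open>0 < r\<close> obtain N0 where N0: "\<And>N. N0 \<le> N \<Longrightarrow> \<bar>\<Sum>j\<in>{1..<M}. (-1)^j * a j * w N j\<bar> < r / 2"
    using LIMSEQ_D[of _ 0 "r / 2"] by fastforce
  show "\<exists>N0. \<forall>N\<ge>N0. norm ((\<Sum>j=1..N. (-1)^j * a j * w N j) - 0) < r"
  proof (intro exI allI impI)
    fix N
    assume N: "max N0 M \<le> N"
    have "{1..N} = {1..<M} \<union> {M..N}"
      using N by (auto simp: M_def)
    then have split: "(\<Sum>j=1..N. (-1)^j * a j * w N j)
        = (\<Sum>j\<in>{1..<M}. (-1)^j * a j * w N j) + (\<Sum>j=M..N. (-1)^j * a j * w N j)"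
      by (simp add: sum.union_disjoint ivl_disj_int)
    have "\<bar>\<Sum>j=M..N. (-1)^j * a j * w N j\<bar> \<le> a M * w N N"
      using N by (intro alternating_sum_abs_le a_nonneg a_dec w_nonneg w_mono) (auto simp: M_def)
    also have "\<dots> \<le> a M"
      using w_le_1 a_nonneg by (simp add: mult_left_le)
    also have "\<dots> < r / 2"
      using M0[of M] by (simp add: M_def)
    finally show "norm ((\<Sum>j=1..N. (-1)^j * a j * w N j) - 0) < r"
      using N0[of N] N unfolding split by simp
  qed
qed

lemma polylog_partial_sums_tendsto:
  fixes x :: real
  assumes "\<bar>x\<bar> < 1"
  shows "(\<lambda>N. \<Sum>k=1..N. x ^ k / real k ^ s) \<longlonglongrightarrow> polylog s x"
proof -
  let ?f = "\<lambda>n. x ^ (n + 1) / real (n + 1) ^ s"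
  have "summable (\<lambda>n. \<bar>x\<bar> ^ (n + 1))"
    using assms by (simp add: summable_geometric)
  moreover have "norm (?f n) \<le> \<bar>x\<bar> ^ (n + 1)" for n
  proof -
    have "\<bar>x\<bar> ^ (n + 1) / real (n + 1) ^ s \<le> \<bar>x\<bar> ^ (n + 1) / 1"
      by (intro frac_le) (simp_all add: one_le_power)
    then show ?thesis by (simp add: power_abs abs_mult)
  qed
  ultimately have "summable ?f"
    by (rule summable_comparison_test')
  then show ?thesis
    using summable_LIMSEQ by (simp add: polylog_def sum.atLeast1_atMost_eq)
qed

definition harm_star :: "nat \<Rightarrow> nat \<Rightarrow> real" where
  "harm_star m n = zeta_star_partial (replicate m 1) n"

lemma harm_star_0 [simp]: "harm_star 0 n = 1"
  by (simp add: harm_star_def)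

lemma harm_star_Suc: "harm_star (Suc m) n = (\<Sum>i=1..n. harm_star m i / real i)"
  by (simp add: harm_star_def mzs_term_def)

lemma harm_star_1: "harm_star 1 n = harm n"
  by (simp add: harm_star_Suc harm_def divide_inverse)

lemma harm_star_nonneg: "0 \<le> harm_star m n"
  by (induction m arbitrary: n) (simp_all add: harm_star_Suc sum_nonneg)

lemma harm_star_mono: "n \<le> n' \<Longrightarrow> harm_star m n \<le> harm_star m n'"
  by (cases m) (auto simp: harm_star_Suc harm_star_nonneg intro!: sum_mono2)

lemma harm_star_le_Suc: "1 \<le> n \<Longrightarrow> harm_star m n \<le> harm_star (Suc m) n"
proof (induction m arbitrary: n)
  case 0
  then show ?case
    using member_le_sum[of 1 "{1..n}" "\<lambda>i. 1 / real i"] by (simp add: harm_star_Suc)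
next
  case (Suc m)
  have "(\<Sum>i=1..n. harm_star m i / real i) \<le> (\<Sum>i=1..n. harm_star (Suc m) i / real i)"
    by (intro sum_mono divide_right_mono Suc.IH) auto
  then show ?case
    by (simp only: harm_star_Suc[of "Suc m" n] harm_star_Suc[of m n])
qed

lemma harm_star_div_decreasing:
  assumes "1 \<le> n"
  shows "harm_star m (Suc n) / real (Suc n) \<le> harm_star m n / real n"
proof (induction m)
  case 0
  from assms show ?case by (simp add: frac_le)
next
  case (Suc m)
  note Suc.IH
  also have "harm_star m n / real n \<le> harm_star (Suc m) n / real n"
    using harm_star_le_Suc[OF assms] by (simp add: divide_right_mono)
  finally have "harm_star (Suc m) (Suc n) \<le> harm_star (Suc m) n + harm_star (Suc m) n / real n"
    by (simp add: harm_star_Suc[of m])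
  with assms show ?case
    by (simp add: field_simps)
qed

lemma harm_star_le_harm_power: "harm_star m n \<le> harm n ^ m"
proof (induction m arbitrary: n)
  case (Suc m)
  have "harm_star (Suc m) n \<le> (\<Sum>i=1..n. harm n ^ m / real i)"
    unfolding harm_star_Suc
  proof (intro sum_mono divide_right_mono)
    fix i assume "i \<in> {1..n}"
    then have "harm i \<le> (harm n :: real)"
      using harm_star_mono[of i n 1, unfolded harm_star_1] by simp
    then show "harm_star m i \<le> harm n ^ m"
      using Suc.IH[of i] harm_nonneg by (meson order_trans power_mono)
  qed simp
  also have "\<dots> = harm n ^ m * harm n"
    by (simp add: harm_def sum_distrib_left divide_inverse)
  also have "\<dots> = harm n ^ Suc m"
    by simp
  finally show ?case .
qed simp

lemma harm_star_div_tendsto_0: "(\<lambda>n. harm_star m n / real n) \<longlonglongrightarrow> 0"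
proof (rule tendsto_sandwich[of "\<lambda>_. 0" _ _ "\<lambda>n. (1 + ln (real n)) ^ m / real n"])
  show "\<forall>\<^sub>F n in sequentially. harm_star m n / real n \<le> (1 + ln (real n)) ^ m / real n"
  proof (rule eventually_sequentiallyI[of 1])
    fix n :: nat assume "1 \<le> n"
    then have "harm n \<le> 1 + ln (real n)"
      using euler_mascheroni_sequence_decreasing[of 1 n] by (simp add: harm_def)
    then have "harm_star m n \<le> (1 + ln (real n)) ^ m"
      using harm_star_le_harm_power[of m n] harm_nonneg by (meson order_trans power_mono)
    then show "harm_star m n / real n \<le> (1 + ln (real n)) ^ m / real n"
      by (simp add: divide_right_mono)
  qed
  show "(\<lambda>n. (1 + ln (real n)) ^ m / real n) \<longlonglongrightarrow> 0"
    by real_asymp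
qed (simp_all add: harm_star_nonneg)

lemma harm_star_Suc_binomial_transform:
  assumes "1 \<le> k"
  shows "(\<Sum>j=1..k. (-1)^j * real (k choose j) * harm_star (Suc m) j)
           = (\<Sum>i=1..k. real ((k - 1) choose (i - 1)) * ((-1)^i * harm_star m i / real i))"
proof -
  have "(\<Sum>j=1..k. (-1)^j * real (k choose j) * harm_star (Suc m) j)
      = (\<Sum>j=1..k. \<Sum>i=1..j. harm_star m i / real i * ((-1)^j * real (k choose j)))"
    by (simp add: harm_star_Suc sum_distrib_left sum_distrib_right mult.commute)
  also have "\<dots> = (\<Sum>i=1..k. harm_star m i / real i * (\<Sum>j=i..k. (-1)^j * real (k choose j)))"
    by (simp only: sum_triangle_swap sum_distrib_left)
  also have "\<dots> = (\<Sum>i=1..k. real ((k - 1) choose (i - 1)) * ((-1)^i * harm_star m i / real i))"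
    by (intro sum.cong refl) (simp add: choose_alternating_tail_sum)
  finally show ?thesis .
qed

lemma harm_star_binomial_transform:
  assumes "1 \<le> k"
  shows "(\<Sum>j=1..k. (-1)^j * real (k choose j) * harm_star m j) = - 1 / real k ^ m"
proof (induction m)
  case 0
  show ?case
    using choose_alternating_tail_sum[of 1 k, where 'a = real] assms by simp
next
  case (Suc m)
  have "(\<Sum>j=1..k. (-1)^j * real (k choose j) * harm_star (Suc m) j)
      = (\<Sum>i=1..k. real ((k - 1) choose (i - 1)) * ((-1)^i * harm_star m i / real i))"
    by (rule harm_star_Suc_binomial_transform[OF assms])
  also have "\<dots> = (\<Sum>j=1..k. real (k choose j) * ((-1)^j * harm_star m j)) / real k"
    by (rule sum_choose_pred_div[OF assms])
  also have "\<dots> = - 1 / real k ^ Suc m"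
    using Suc.IH by (simp add: mult_ac)
  finally show ?case .
qed

lemma harm_star_euler_coefficient:
  assumes "1 \<le> k"
  shows "(\<Sum>j=1..k. (-1)^j * real ((k - 1) choose (j - 1)) * (harm_star m j / real j))
           = - 1 / real k ^ Suc m"
  using sum_choose_pred_div[OF assms, of "\<lambda>j. (-1)^j * harm_star m j"]
    harm_star_binomial_transform[OF assms, of m]
  by (simp add: mult_ac)

lemma zeta_star_partial_alternating_ones:
  "zeta_star_partial ((-1) # replicate m 1)
     = (\<lambda>N. (\<Sum>j=1..N. (-1)^j * (harm_star m j / real j) * binomial_lower_tail N j)
            - (\<Sum>k=1..N. (1/2)^k / real k ^ Suc m))"
proof
  fix N
  let ?a = "\<lambda>j. harm_star m j / real j"
  have "zeta_star_partial ((-1) # replicate m 1) N = (\<Sum>j=1..N. (-1)^j * ?a j)"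
    by (simp add: harm_star_def mzs_term_def)
  also have "\<dots> = (\<Sum>j=1..N. (-1)^j * ?a j * binomial_lower_tail N j)
      + (\<Sum>j=1..N. (-1)^j * ?a j * (1 - binomial_lower_tail N j))"
    unfolding sum.distrib[symmetric] distrib_left[symmetric] by simp
  also have "(\<Sum>j=1..N. (-1)^j * ?a j * (1 - binomial_lower_tail N j))
      = (\<Sum>k=1..N. (\<Sum>j=1..k. (-1)^j * real ((k - 1) choose (j - 1)) * ?a j) / 2 ^ k)"
    by (rule euler_transform_partial_sum[symmetric])
  also have "\<dots> = - (\<Sum>k=1..N. (1/2)^k / real k ^ Suc m)"
    unfolding sum_negf[symmetric]
    by (intro sum.cong refl) (use harm_star_euler_coefficient in \<open>simp add: power_one_over\<close>)
  finally show "zeta_star_partial ((-1) # replicate m 1) N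
      = (\<Sum>j=1..N. (-1)^j * ?a j * binomial_lower_tail N j) - (\<Sum>k=1..N. (1/2)^k / real k ^ Suc m)"
    by simp
qed

lemma harm_star_euler_remainder_tendsto_0:
  "(\<lambda>N. \<Sum>j=1..N. (-1)^j * (harm_star m j / real j) * binomial_lower_tail N j) \<longlonglongrightarrow> 0"
proof (rule alternating_weighted_sum_tendsto_0)
  show "harm_star m (Suc j) / real (Suc j) \<le> harm_star m j / real j" if "1 \<le> j" for j
    using that by (rule harm_star_div_decreasing)
  show "mono (binomial_lower_tail N)" for N
    by (rule monoI) (rule binomial_lower_tail_mono)
  show "binomial_lower_tail N N \<le> 1" for N
    by (simp add: binomial_lower_tail_le_1)
qed (simp_all add: harm_star_div_tendsto_0 harm_star_nonneg binomial_lower_tail_nonneg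
  binomial_lower_tail_tendsto_0)

theorem mainTheorem2:
  fixes m :: nat
  shows "convergent (zeta_star_partial ((-1) # replicate m 1))
         \<and> zeta_star ((-1) # replicate m 1) = - polylog (m+1) (1/2)"
proof -
  have "zeta_star_partial ((-1) # replicate m 1) \<longlonglongrightarrow> 0 - polylog (Suc m) (1/2)"
    unfolding zeta_star_partial_alternating_ones
    by (intro tendsto_diff harm_star_euler_remainder_tendsto_0 polylog_partial_sums_tendsto) simp
  then show ?thesis
    by (auto simp: convergent_def zeta_star_def limI)
qed

end
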